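(* Let $n,N\ge1$ be integers, $0<p<1$, $0<\epsilon_1<1$, and $\beta>0$ with $L=\beta n$ a positive integer. Define $$\beta_0=\frac{\log_2\left(\dfrac{\epsilon_1}{2^{n}N^2\left((1+2p-p^2)^n-1\right)}\right)}{n\log_2\left(1-\frac{1}{2}(1-p)^2\right)}.$$ If $\beta\ge\beta_0$, then in the random model described in the context, $P\big(|\mathsf{Y_{faulty}}|>1\big)<\epsilon_1$.
   Context: Model: Let $M=2^n$ and $C=\{0,1\}^n=\{\mathbf{x}_1,\dots,\mathbf{x}_M\}$ (addresses). Data parts $\mathbf{d}_1,\dots,\mathbf{d}_M$ are independent and uniform on $\{0,1\}^L$; strand $i$ is $(\mathbf{x}_i,\mathbf{d}_i)$. Each strand is transmitted $N$ times through $\mathsf{BEC}(p)$ (each symbol independently replaced by $*$ with probability $p$, independently across transmissions and strands); $\mathcal{S}_N((\mathbf{x}_i,\mathbf{d}_i))$ is the multiset of the $N$ reads of strand $i$, and $\mathcal{Y}$ the multiset of all $MN$ reads. Two words $\mathbf{u},\mathbf{v}\in\{0,1,*\}^\ell$ agree, $\mathbf{u}\cong\mathbf{v}$, if $u_k=v_k$ wherever neither is erased; reads agree if both address parts and data parts agree. A read $(\mathbf{y},\mathbf{d}')\in\mathcal{S}_N((\mathbf{x},\mathbf{d}))$ is faulty if it agrees with some read of a strand $(\tilde{\mathbf{x}},\tilde{\mathbf{d}})$ with $\tilde{\mathbf{x}}\ne\mathbf{x}$; $\mathsf{Y_{faulty}}$ is the multiset of faulty reads. *)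

theory Defs
  imports "HOL-Probability.Probability"
begin

text \<open>Symbols of {0,1,*}: Some b is a bit, None is the erasure symbol *.\<close>
type_synonym sym = "bool option"
type_synonym word = "sym list"
type_synonym read = "word \<times> word"  \<comment> \<open>(address part, data part)\<close>

fun bec_word :: "real \<Rightarrow> bool list \<Rightarrow> word pmf" where
  "bec_word p [] = return_pmf []"
| "bec_word p (b # w) =
     bind_pmf (bernoulli_pmf p) (\<lambda>e. bind_pmf (bec_word p w) (\<lambda>r.
       return_pmf ((if e then None else Some b) # r)))"

definition bec_strand :: "real \<Rightarrow> bool list \<Rightarrow> bool list \<Rightarrow> read pmf" where
  "bec_strand p x d = pair_pmf (bec_word p x) (bec_word p d)"

definition agree_word :: "word \<Rightarrow> word \<Rightarrow> bool" where
  "agree_word u v \<longleftrightarrow> length u = length v \<and>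
     (\<forall>k < length u. u ! k \<noteq> None \<and> v ! k \<noteq> None \<longrightarrow> u ! k = v ! k)"

definition agree_read :: "read \<Rightarrow> read \<Rightarrow> bool" where
  "agree_read r s \<longleftrightarrow> agree_word (fst r) (fst s) \<and> agree_word (snd r) (snd s)"

text \<open>Address set C = {0,1}^n; strands are indexed by their (distinct) addresses.\<close>
definition addresses :: "nat \<Rightarrow> bool list set" where
  "addresses n = {x. length x = n}"

text \<open>Outcome R: R x t is the t-th read (t < N) of the strand with address x.\<close>
definition reads_pmf :: "nat \<Rightarrow> nat \<Rightarrow> nat \<Rightarrow> real \<Rightarrow> (bool list \<Rightarrow> nat \<Rightarrow> read) pmf" where
  "reads_pmf n L N p =
     Pi_pmf (addresses n) undefined (\<lambda>x.
       bind_pmf (pmf_of_set {d :: bool list. length d = L}) (\<lambda>d.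
         Pi_pmf {..<N} undefined (\<lambda>t. bec_strand p x d)))"

text \<open>Indices of faulty reads: the read (x,t) agrees with some read of a strand with a
  different address. |Y_faulty| is the number of such reads (multiset size).\<close>
definition faulty_reads :: "nat \<Rightarrow> nat \<Rightarrow> (bool list \<Rightarrow> nat \<Rightarrow> read) \<Rightarrow> (bool list \<times> nat) set" where
  "faulty_reads n N R = {(x, t). x \<in> addresses n \<and> t < N \<and>
      (\<exists>x' \<in> addresses n. x' \<noteq> x \<and> (\<exists>t' < N. agree_read (R x t) (R x' t')))}"

definition num_faulty :: "nat \<Rightarrow> nat \<Rightarrow> (bool list \<Rightarrow> nat \<Rightarrow> read) \<Rightarrow> nat" where
  "num_faulty n N R = card (faulty_reads n N R)"

definition beta0 :: "nat \<Rightarrow> nat \<Rightarrow> real \<Rightarrow> real \<Rightarrow> real" where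
  "beta0 n N p \<epsilon>1 =
     log 2 (\<epsilon>1 / (2 ^ n * real N ^ 2 * ((1 + 2 * p - p\<^sup>2) ^ n - 1)))
     / (real n * log 2 (1 - (1 - p)\<^sup>2 / 2))"

end

theory Submission
  imports Defs "HOL-Library.List_Lexorder"
begin

text \<open>A faulty read exists only if a read of some strand x agrees with a read of a strand
  x' \<noteq> x, so a union bound over the N^2 pairs of reads of each unordered pair of distinct
  addresses suffices. Independent BEC(p) copies of bits a, b agree with probability 1 if a = b
  and with probability c = 1 - (1-p)^2 (some copy is erased) otherwise. Hence reads of x and x'
  agree with probability c^d(x,x') q^L, where d is the Hamming distance and q = (1+c)/2
  averages over the independent uniform data bits. Summing c^d(x,x') over the unordered pairs
  gives 2^n ((1+c)^n - 1)/2, and \<beta> \<ge> \<beta>0 says precisely that the resulting bound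
  2^n N^2 ((1+c)^n - 1) q^L / 2 is at most \<epsilon>1/2.\<close>

lemma measure_pmf_prob_bind:
  "measure_pmf.prob (bind_pmf M f) A = (\<integral>x. measure_pmf.prob (f x) A \<partial>M)"
  unfolding measure_pmf_bind
  using measurable_measure_pmf[of f]
  by (subst measure_pmf.measure_bind[where N="count_space UNIV"]) auto

lemma pair_pmf_bind_pmf:
  "pair_pmf (bind_pmf A f) (bind_pmf B g) = bind_pmf A (\<lambda>a. bind_pmf B (\<lambda>b. pair_pmf (f a) (g b)))"
  unfolding pair_pmf_def bind_assoc_pmf
  by (rule bind_pmf_cong[OF refl], subst bind_commute_pmf) (simp add: bind_assoc_pmf)

lemma pair_pmf_map_pair_pmf:
  "pair_pmf (map_pmf f (pair_pmf A B)) (map_pmf g (pair_pmf C D))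
   = map_pmf (\<lambda>((a, c), (b, d)). (f (a, b), g (c, d))) (pair_pmf (pair_pmf A C) (pair_pmf B D))"
  by (simp add: map_pmf_def pair_pmf_def bind_assoc_pmf bind_return_pmf)
     (rule bind_pmf_cong[OF refl], rule bind_commute_pmf)

lemma map_pmf_Pi_pmf_pair:
  assumes "finite A" "x \<in> A" "y \<in> A" "x \<noteq> y"
  shows "map_pmf (\<lambda>f. (f x, f y)) (Pi_pmf A dflt P) = pair_pmf (P x) (P y)"
proof -
  have "map_pmf (\<lambda>f. (f x, f y)) (Pi_pmf A dflt P) = map_pmf (\<lambda>f. (f x, f y)) (Pi_pmf {x, y} dflt P)"
    using assms by (subst Pi_pmf_subset[of A "{x, y}"]) (auto simp: map_pmf_comp o_def)
  also have "\<dots> = pair_pmf (P x) (P y)"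
    using assms
    by (simp add: Pi_pmf_insert Pi_pmf_singleton pair_map_pmf2 map_pmf_comp o_def case_prod_unfold)
  finally show ?thesis .
qed

lemma finite_bool_lists: "finite {v :: bool list. length v = m}"
  using finite_lists_length_eq[of "UNIV :: bool set" m] by simp

lemma card_bool_lists: "card {v :: bool list. length v = m} = 2 ^ m"
  using card_lists_length_eq[of "UNIV :: bool set" m] by simp

lemma bool_lists_Suc:
  "{v :: bool list. length v = Suc m} = (\<lambda>(b, v). b # v) ` (UNIV \<times> {v. length v = m})"
  by (auto simp: length_Suc_conv)

definition bec_symbol :: "real \<Rightarrow> bool \<Rightarrow> sym pmf" where
  "bec_symbol p b = map_pmf (\<lambda>e. if e then None else Some b) (bernoulli_pmf p)"

definition agree_sym :: "sym \<Rightarrow> sym \<Rightarrow> bool" where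
  "agree_sym s s' \<longleftrightarrow> (s \<noteq> None \<and> s' \<noteq> None \<longrightarrow> s = s')"

definition mismatch_agree_prob :: "real \<Rightarrow> real" where
  "mismatch_agree_prob p = 1 - (1 - p)\<^sup>2"

fun mismatch_weight :: "real \<Rightarrow> bool list \<Rightarrow> bool list \<Rightarrow> real" where
  "mismatch_weight c [] [] = 1"
| "mismatch_weight c (a # u) (b # v) = (if a = b then 1 else c) * mismatch_weight c u v"
| "mismatch_weight c _ _ = 0"

lemma bec_word_Cons:
  "bec_word p (b # w) = map_pmf (\<lambda>(s, r). s # r) (pair_pmf (bec_symbol p b) (bec_word p w))"
  by (simp add: bec_symbol_def map_pmf_def pair_pmf_def bind_assoc_pmf bind_return_pmf)

lemma agree_word_Cons:
  "agree_word (s # u) (s' # v) \<longleftrightarrow> agree_sym s s' \<and> agree_word u v"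
  unfolding agree_word_def agree_sym_def by (auto simp: All_less_Suc2)

lemma agree_read_commute: "agree_read r s \<longleftrightarrow> agree_read s r"
  unfolding agree_read_def agree_word_def by auto

lemma prob_agree_bec_symbol:
  assumes "0 \<le> p" "p \<le> 1"
  shows "measure_pmf.prob (pair_pmf (bec_symbol p a) (bec_symbol p b)) {(s, s'). agree_sym s s'}
       = (if a = b then 1 else mismatch_agree_prob p)"
proof -
  let ?E = "pair_pmf (bernoulli_pmf p) (bernoulli_pmf p)"
  have "measure_pmf.prob (pair_pmf (bec_symbol p a) (bec_symbol p b)) {(s, s'). agree_sym s s'}
      = measure_pmf.prob ?E (if a = b then UNIV else - {(False, False)})"
    unfolding bec_symbol_def map_pair[symmetric] measure_map_pmf
    by (rule arg_cong[where f="measure_pmf.prob _"]) (auto simp: agree_sym_def)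
  moreover have "measure_pmf.prob ?E (- {(False, False)}) = mismatch_agree_prob p"
    using assms measure_pmf.prob_compl[of "{(False, False)}" ?E]
    by (simp add: Compl_eq_Diff_UNIV measure_pmf_single pmf_pair mismatch_agree_prob_def power2_eq_square)
  ultimately show ?thesis by simp
qed

lemma prob_agree_bec_word:
  assumes "0 \<le> p" "p \<le> 1" "length u = length v"
  shows "measure_pmf.prob (pair_pmf (bec_word p u) (bec_word p v)) {(r, s). agree_word r s}
       = mismatch_weight (mismatch_agree_prob p) u v"
  using assms(3)
proof (induction u v rule: list_induct2)
  case Nil
  then show ?case by (simp add: agree_word_def)
next
  case (Cons a u b v)
  have "measure_pmf.prob (pair_pmf (bec_word p (a # u)) (bec_word p (b # v))) {(r, s). agree_word r s}
     = measure_pmf.prob (pair_pmf (pair_pmf (bec_symbol p a) (bec_symbol p b))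
                                  (pair_pmf (bec_word p u) (bec_word p v)))
         ({(s, s'). agree_sym s s'} \<times> {(r, s). agree_word r s})"
    unfolding bec_word_Cons pair_pmf_map_pair_pmf measure_map_pmf
    by (rule arg_cong[where f="measure_pmf.prob _"]) (auto simp: agree_word_Cons)
  also have "\<dots> = mismatch_weight (mismatch_agree_prob p) (a # u) (b # v)"
    using prob_agree_bec_symbol[OF assms(1,2)] Cons.IH
    by (subst measure_pmf_prob_product) (auto intro: countableI_type)
  finally show ?case .
qed

lemma mismatch_weight_self: "mismatch_weight c u u = 1"
  by (induction u) auto

lemma mismatch_weight_commute: "mismatch_weight c u v = mismatch_weight c v u"
  by (induction c u v rule: mismatch_weight.induct) auto

lemma sum_mismatch_weight:
  "length u = m \<Longrightarrow> (\<Sum>v | length v = m. mismatch_weight c u v) = (1 + c) ^ m"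
proof (induction u arbitrary: m)
  case Nil
  then show ?case by simp
next
  case (Cons a u)
  then obtain k where m: "m = Suc k" and k: "length u = k" by auto
  have "(\<Sum>v | length v = m. mismatch_weight c (a # u) v)
      = (\<Sum>(b, v) \<in> UNIV \<times> {v. length v = k}. mismatch_weight c (a # u) (b # v))"
    unfolding m bool_lists_Suc by (subst sum.reindex) (auto simp: inj_on_def case_prod_unfold)
  also have "\<dots> = (\<Sum>b\<in>UNIV. (if a = b then 1 else c) * (\<Sum>v | length v = k. mismatch_weight c u v))"
    by (simp add: sum.cartesian_product[symmetric] sum_distrib_left)
  also have "\<dots> = (1 + c) ^ m"
    unfolding m Cons.IH[OF k] by (cases a) (simp_all add: UNIV_bool algebra_simps)
  finally show ?case .
qed

lemma sum_mismatch_weight_ordered_pairs: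
  fixes n :: nat and c :: real
  defines "P \<equiv> {(x, y). x \<in> addresses n \<and> y \<in> addresses n \<and> x < y}"
  shows "(\<Sum>(x, y)\<in>P. mismatch_weight c x y) = 2 ^ n * ((1 + c) ^ n - 1) / 2"
proof -
  let ?A = "addresses n"
  have fin: "finite P"
    by (rule finite_subset[of _ "?A \<times> ?A"]) (auto simp: P_def addresses_def finite_bool_lists)
  have "(\<Sum>(x, y)\<in>Sigma ?A (\<lambda>x. ?A - {x}). mismatch_weight c x y) = (\<Sum>x\<in>?A. (1 + c) ^ n - 1)"
    by (simp add: addresses_def sum.Sigma[symmetric] finite_bool_lists sum_diff1 sum_mismatch_weight
        mismatch_weight_self)
  also have "\<dots> = 2 ^ n * ((1 + c) ^ n - 1)"
    by (simp add: addresses_def card_bool_lists)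
  also have "Sigma ?A (\<lambda>x. ?A - {x}) = P \<union> prod.swap ` P"
    by (auto simp: P_def neq_iff)
  also have "(\<Sum>(x, y)\<in>P \<union> prod.swap ` P. mismatch_weight c x y) = 2 * (\<Sum>(x, y)\<in>P. mismatch_weight c x y)"
    using fin
    by (subst sum.union_disjoint) (auto simp: P_def sum.reindex mismatch_weight_commute case_prod_unfold)
  finally show ?thesis by simp
qed

lemma prob_agree_bec_strand:
  assumes "0 \<le> p" "p \<le> 1" "length x = length x'" "length d = length d'"
  shows "measure_pmf.prob (pair_pmf (bec_strand p x d) (bec_strand p x' d')) {(r, s). agree_read r s}
       = mismatch_weight (mismatch_agree_prob p) x x' * mismatch_weight (mismatch_agree_prob p) d d'"
proof -
  have "pair_pmf (bec_strand p x d) (bec_strand p x' d')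
      = map_pmf (\<lambda>((a, a'), (b, b')). ((a, b), (a', b')))
          (pair_pmf (pair_pmf (bec_word p x) (bec_word p x')) (pair_pmf (bec_word p d) (bec_word p d')))"
    using pair_pmf_map_pair_pmf[of id "bec_word p x" "bec_word p d" id "bec_word p x'" "bec_word p d'"]
    by (simp add: bec_strand_def)
  then have "measure_pmf.prob (pair_pmf (bec_strand p x d) (bec_strand p x' d')) {(r, s). agree_read r s}
      = measure_pmf.prob (pair_pmf (pair_pmf (bec_word p x) (bec_word p x')) (pair_pmf (bec_word p d) (bec_word p d')))
          ({(a, b). agree_word a b} \<times> {(a, b). agree_word a b})"
    unfolding measure_map_pmf
    by (auto simp: agree_read_def intro!: arg_cong[where f="measure_pmf.prob _"])
  then show ?thesis
    using assms by (simp add: measure_pmf_prob_product countableI_type prob_agree_bec_word)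
qed

lemma prob_agree_random_strands:
  fixes L :: nat
  assumes "0 \<le> p" "p \<le> 1" "length x = length x'"
  defines "D \<equiv> pmf_of_set {d :: bool list. length d = L}"
  shows "measure_pmf.prob (pair_pmf (bind_pmf D (bec_strand p x)) (bind_pmf D (bec_strand p x')))
           {(r, s). agree_read r s}
       = mismatch_weight (mismatch_agree_prob p) x x' * ((1 + mismatch_agree_prob p) / 2) ^ L"
proof -
  let ?c = "mismatch_agree_prob p"
  let ?S = "{d :: bool list. length d = L}"
  have "?S \<noteq> {}" using length_replicate[of L True] by blast
  have strands: "measure_pmf.prob (pair_pmf (bec_strand p x d) (bec_strand p x' d')) {(r, s). agree_read r s}
      = mismatch_weight ?c x x' * mismatch_weight ?c d d'" if "d \<in> ?S" "d' \<in> ?S" for d d'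
    using that assms by (simp add: prob_agree_bec_strand)
  have "measure_pmf.prob (pair_pmf (bind_pmf D (bec_strand p x)) (bind_pmf D (bec_strand p x')))
           {(r, s). agree_read r s}
      = (\<Sum>d\<in>?S. \<Sum>d'\<in>?S. measure_pmf.prob (pair_pmf (bec_strand p x d) (bec_strand p x' d'))
           {(r, s). agree_read r s}) / (2 ^ L * 2 ^ L)"
    unfolding pair_pmf_bind_pmf measure_pmf_prob_bind D_def
    using \<open>?S \<noteq> {}\<close> by (simp add: integral_pmf_of_set finite_bool_lists card_bool_lists)
  also have "\<dots> = (\<Sum>d\<in>?S. \<Sum>d'\<in>?S. mismatch_weight ?c x x' * mismatch_weight ?c d d') / (2 ^ L * 2 ^ L)"
    by (simp only: strands cong: sum.cong)
  also have "\<dots> = mismatch_weight ?c x x' * ((1 + ?c) / 2) ^ L"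
    by (simp add: sum_distrib_left[symmetric] sum_mismatch_weight card_bool_lists power_divide)
  finally show ?thesis .
qed

lemma map_reads_pmf_two_reads:
  fixes n L N :: nat
  assumes "x \<in> addresses n" "x' \<in> addresses n" "x \<noteq> x'" "t < N" "t' < N"
  defines "D \<equiv> pmf_of_set {d :: bool list. length d = L}"
  shows "map_pmf (\<lambda>R. (R x t, R x' t')) (reads_pmf n L N p)
       = pair_pmf (bind_pmf D (bec_strand p x)) (bind_pmf D (bec_strand p x'))"
proof -
  have "finite (addresses n)"
    unfolding addresses_def by (rule finite_bool_lists)
  have "map_pmf (\<lambda>R. (R x t, R x' t')) (reads_pmf n L N p)
      = map_pmf (\<lambda>(f, g). (f t, g t')) (map_pmf (\<lambda>R. (R x, R x')) (reads_pmf n L N p))"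
    by (simp add: map_pmf_comp)
  also have "\<dots> = map_pmf (\<lambda>(f, g). (f t, g t'))
      (pair_pmf (bind_pmf D (\<lambda>d. Pi_pmf {..<N} undefined (\<lambda>_. bec_strand p x d)))
                (bind_pmf D (\<lambda>d. Pi_pmf {..<N} undefined (\<lambda>_. bec_strand p x' d))))"
    unfolding reads_pmf_def D_def using assms \<open>finite (addresses n)\<close>
    by (subst map_pmf_Pi_pmf_pair) auto
  also have "\<dots> = pair_pmf (bind_pmf D (bec_strand p x)) (bind_pmf D (bec_strand p x'))"
    using assms by (simp add: map_pair map_bind_pmf Pi_pmf_component)
  finally show ?thesis .
qed

lemma prob_reads_agree:
  assumes "0 \<le> p" "p \<le> 1" "x \<in> addresses n" "x' \<in> addresses n" "x \<noteq> x'" "t < N" "t' < N"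
  shows "measure_pmf.prob (reads_pmf n L N p) {R. agree_read (R x t) (R x' t')}
       = mismatch_weight (mismatch_agree_prob p) x x' * ((1 + mismatch_agree_prob p) / 2) ^ L"
proof -
  have "measure_pmf.prob (reads_pmf n L N p) {R. agree_read (R x t) (R x' t')}
      = measure_pmf.prob (map_pmf (\<lambda>R. (R x t, R x' t')) (reads_pmf n L N p)) {(r, s). agree_read r s}"
    by simp
  also have "\<dots> = mismatch_weight (mismatch_agree_prob p) x x' * ((1 + mismatch_agree_prob p) / 2) ^ L"
    unfolding map_reads_pmf_two_reads[OF assms(3-7)]
    using assms by (intro prob_agree_random_strands) (auto simp: addresses_def)
  finally show ?thesis .
qed

lemma faulty_read_pair:
  assumes "faulty_reads n N R \<noteq> {}"
  obtains x x' t t' where "x \<in> addresses n" "x' \<in> addresses n" "x < x'" "t < N" "t' < N"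
    "agree_read (R x t) (R x' t')"
proof -
  obtain x t x' t' where "x \<in> addresses n" "x' \<in> addresses n" "x' \<noteq> x" "t < N" "t' < N"
      "agree_read (R x t) (R x' t')"
    using assms unfolding faulty_reads_def by auto
  then show ?thesis
    using that agree_read_commute by (cases "x < x'") (auto simp: neq_iff)
qed

lemma prob_faulty_le:
  assumes "0 \<le> p" "p \<le> 1"
  defines "c \<equiv> mismatch_agree_prob p"
  shows "measure_pmf.prob (reads_pmf n L N p) {R. num_faulty n N R > 0}
       \<le> 2 ^ n * real N ^ 2 * ((1 + c) ^ n - 1) * ((1 + c) / 2) ^ L / 2"
proof -
  let ?M = "reads_pmf n L N p"
  define P where "P = {(x, x'). x \<in> addresses n \<and> x' \<in> addresses n \<and> x < x'}"
  define T where "T = {..<N} \<times> {..<N}"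
  define E :: "(bool list \<times> bool list) \<times> nat \<times> nat \<Rightarrow> (bool list \<Rightarrow> nat \<Rightarrow> read) set"
    where "E = (\<lambda>((x, x'), (t, t')). {R. agree_read (R x t) (R x' t')})"
  have "finite P"
    by (rule finite_subset[of _ "addresses n \<times> addresses n"])
       (auto simp: P_def addresses_def finite_bool_lists)
  have "{R. num_faulty n N R > 0} \<subseteq> (\<Union>i\<in>P \<times> T. E i)"
  proof
    fix R assume "R \<in> {R. num_faulty n N R > 0}"
    then have "faulty_reads n N R \<noteq> {}"
      unfolding num_faulty_def by auto
    then obtain x x' t t' where "x \<in> addresses n" "x' \<in> addresses n" "x < x'" "t < N" "t' < N"
        "agree_read (R x t) (R x' t')"
      by (rule faulty_read_pair)
    then have "((x, x'), (t, t')) \<in> P \<times> T" "R \<in> E ((x, x'), (t, t'))"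
      by (auto simp: P_def T_def E_def)
    then show "R \<in> (\<Union>i\<in>P \<times> T. E i)" by blast
  qed
  then have "measure_pmf.prob ?M {R. num_faulty n N R > 0} \<le> measure_pmf.prob ?M (\<Union>i\<in>P \<times> T. E i)"
    by (rule measure_pmf.finite_measure_mono) simp
  also have "\<dots> \<le> (\<Sum>i\<in>P \<times> T. measure_pmf.prob ?M (E i))"
    using \<open>finite P\<close> by (intro measure_pmf.finite_measure_subadditive_finite) (auto simp: T_def)
  also have "\<dots> = (\<Sum>i\<in>P \<times> T. mismatch_weight c (fst (fst i)) (snd (fst i)) * ((1 + c) / 2) ^ L)"
    using assms by (intro sum.cong refl) (auto simp: P_def T_def E_def c_def prob_reads_agree)
  also have "\<dots> = real N ^ 2 * ((1 + c) / 2) ^ L * (\<Sum>(x, x')\<in>P. mismatch_weight c x x')"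
    by (simp add: sum.cartesian_product' T_def sum_distrib_left sum_distrib_right case_prod_unfold
        power2_eq_square mult_ac)
  also have "\<dots> = 2 ^ n * real N ^ 2 * ((1 + c) ^ n - 1) * ((1 + c) / 2) ^ L / 2"
    unfolding P_def sum_mismatch_weight_ordered_pairs by simp
  finally show ?thesis .
qed

lemma mult_power_le_of_exponent_ge:
  fixes K q :: real
  assumes "n \<ge> 1" "0 < q" "q < 1" "K > 0" "\<epsilon> > 0" "real L = \<beta> * real n"
    and "log 2 (\<epsilon> / K) / (real n * log 2 q) \<le> \<beta>"
  shows "K * q ^ L \<le> \<epsilon>"
proof -
  have "real n * log 2 q < 0"
    using assms(1-3) by (simp add: mult_pos_neg)
  then have "log 2 (q ^ L) \<le> log 2 (\<epsilon> / K)"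
    using assms(2,6,7) by (simp add: neg_divide_le_eq log_nat_power mult.assoc)
  then have "q ^ L \<le> \<epsilon> / K"
    using assms(2,4,5) by simp
  then show ?thesis
    using assms(4) by (simp add: field_simps)
qed

theorem lemma7:
  fixes n N L :: nat and p \<epsilon>1 \<beta> :: real
  assumes "n \<ge> 1" and "N \<ge> 1"
    and "0 < p" and "p < 1"
    and "0 < \<epsilon>1" and "\<epsilon>1 < 1"
    and "\<beta> > 0" and "L > 0" and "real L = \<beta> * real n"
    and "\<beta> \<ge> beta0 n N p \<epsilon>1"
  shows "measure_pmf.prob (reads_pmf n L N p) {R. num_faulty n N R > 1} < \<epsilon>1"
proof -
  define c where "c = mismatch_agree_prob p"
  define q where "q = (1 + c) / 2"
  define K where "K = 2 ^ n * real N ^ 2 * ((1 + c) ^ n - 1)"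
  have "0 < (1 - p)\<^sup>2" "(1 - p)\<^sup>2 < 1"
    using assms(3,4) by (simp_all add: power_less_one_iff)
  then have "0 < c" "0 < q" "q < 1"
    by (simp_all add: q_def c_def mismatch_agree_prob_def)
  have "1 + 2 * p - p\<^sup>2 = 1 + c" "1 - (1 - p)\<^sup>2 / 2 = q"
    by (simp_all add: q_def c_def mismatch_agree_prob_def power2_eq_square field_simps)
  then have "beta0 n N p \<epsilon>1 = log 2 (\<epsilon>1 / K) / (real n * log 2 q)"
    unfolding beta0_def K_def by (simp only:)
  moreover have "K > 0"
    using \<open>0 < c\<close> assms(1,2) by (simp add: K_def one_less_power)
  ultimately have "K * q ^ L \<le> \<epsilon>1"
    using assms(1,5,9,10) \<open>0 < q\<close> \<open>q < 1\<close> by (intro mult_power_le_of_exponent_ge) auto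
  moreover have "measure_pmf.prob (reads_pmf n L N p) {R. num_faulty n N R > 1}
      \<le> measure_pmf.prob (reads_pmf n L N p) {R. num_faulty n N R > 0}"
    by (intro measure_pmf.finite_measure_mono) auto
  moreover have "measure_pmf.prob (reads_pmf n L N p) {R. num_faulty n N R > 0} \<le> K * q ^ L / 2"
    using prob_faulty_le[of p n L N] assms(3,4)
    unfolding c_def[symmetric] q_def[symmetric] K_def[symmetric] by simp
  ultimately show ?thesis
    using assms(5) by linarith
qed

end
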